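(* Let $A$ be a profinite algebra and let $C$ be any coalgebra with $A=C^*$. If $H$ is a simple left $A$-module which embeds in $A$ (as a left $A$-module), then $H$ is a rational $C^*$-module.
   Context: A profinite algebra is an algebra over a field which is an inverse limit of finite dimensional algebras, equivalently the dual algebra $C^*$ of a coalgebra $C$. A left $C^*$-module $M$ is rational if it arises from a right $C$-comodule structure via $f\rightharpoonup m=\sum m_0f(m_1)$, i.e. for every $m\in M$ there are $m_1,\dots,m_n\in M$ and $c_1,\dots,c_n\in C$ with $f\rightharpoonup m=\sum_i f(c_i)m_i$ for all $f\in C^*$. *)

theory Defs
  imports Complex_Main
begin

text \<open>The underlying k-vector space is the whole type 'c
  with scalar multiplication sc. The comultiplication sends c to a finite sum
  of simple tensors, encoded as a list of pairs (a,b) meaning the sum of a \<otimes> b.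
  Since simple tensors of linear functionals separate points of tensor products
  of vector spaces, the coalgebra axioms are stated by testing against linear
  functionals.\<close>

definition dual_space :: "('k::field \<Rightarrow> 'c::ab_group_add \<Rightarrow> 'c) \<Rightarrow> ('c \<Rightarrow> 'k) set" where
  "dual_space sc = {f. Vector_Spaces.linear sc (*) f}"

definition conv :: "('c \<Rightarrow> ('c \<times> 'c) list) \<Rightarrow> ('c \<Rightarrow> 'k::field) \<Rightarrow> ('c \<Rightarrow> 'k) \<Rightarrow> ('c \<Rightarrow> 'k)" where
  "conv \<Delta> f g = (\<lambda>c. \<Sum>(a,b)\<leftarrow>\<Delta> c. f a * g b)"

definition coalgebra :: "('k::field \<Rightarrow> 'c::ab_group_add \<Rightarrow> 'c) \<Rightarrow> ('c \<Rightarrow> ('c \<times> 'c) list) \<Rightarrow> ('c \<Rightarrow> 'k) \<Rightarrow> bool" where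
  "coalgebra sc \<Delta> \<epsilon> \<longleftrightarrow>
     vector_space sc \<and>
     \<epsilon> \<in> dual_space sc \<and>
     (\<forall>f\<in>dual_space sc. \<forall>g\<in>dual_space sc. conv \<Delta> f g \<in> dual_space sc) \<and>
     (\<forall>f\<in>dual_space sc. \<forall>g\<in>dual_space sc. \<forall>h\<in>dual_space sc. \<forall>c.
        (\<Sum>(a,b)\<leftarrow>\<Delta> c. (\<Sum>(a1,a2)\<leftarrow>\<Delta> a. f a1 * g a2) * h b) =
        (\<Sum>(a,b)\<leftarrow>\<Delta> c. f a * (\<Sum>(b1,b2)\<leftarrow>\<Delta> b. g b1 * h b2))) \<and>
     (\<forall>c. (\<Sum>(a,b)\<leftarrow>\<Delta> c. sc (\<epsilon> a) b) = c) \<and>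
     (\<forall>c. (\<Sum>(a,b)\<leftarrow>\<Delta> c. sc (\<epsilon> b) a) = c)"

definition dual_module :: "('k::field \<Rightarrow> 'c::ab_group_add \<Rightarrow> 'c) \<Rightarrow> ('c \<Rightarrow> ('c \<times> 'c) list) \<Rightarrow> ('c \<Rightarrow> 'k)
    \<Rightarrow> ('k \<Rightarrow> 'h::ab_group_add \<Rightarrow> 'h) \<Rightarrow> (('c \<Rightarrow> 'k) \<Rightarrow> 'h \<Rightarrow> 'h) \<Rightarrow> bool" where
  "dual_module sc \<Delta> \<epsilon> scH act \<longleftrightarrow>
     vector_space scH \<and>
     (\<forall>f\<in>dual_space sc. \<forall>x y. act f (x + y) = act f x + act f y) \<and>
     (\<forall>f\<in>dual_space sc. \<forall>g\<in>dual_space sc. \<forall>x. act (\<lambda>c. f c + g c) x = act f x + act g x) \<and>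
     (\<forall>f\<in>dual_space sc. \<forall>g\<in>dual_space sc. \<forall>x. act (conv \<Delta> f g) x = act f (act g x)) \<and>
     (\<forall>x. act \<epsilon> x = x) \<and>
     (\<forall>f\<in>dual_space sc. \<forall>r x. act (\<lambda>c. r * f c) x = scH r (act f x) \<and> act f (scH r x) = scH r (act f x))"

definition dual_submodule :: "('k::field \<Rightarrow> 'c::ab_group_add \<Rightarrow> 'c) \<Rightarrow> (('c \<Rightarrow> 'k) \<Rightarrow> 'h::ab_group_add \<Rightarrow> 'h) \<Rightarrow> 'h set \<Rightarrow> bool" where
  "dual_submodule sc act N \<longleftrightarrow>
     0 \<in> N \<and> (\<forall>x\<in>N. \<forall>y\<in>N. x + y \<in> N) \<and> (\<forall>f\<in>dual_space sc. \<forall>x\<in>N. act f x \<in> N)"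

definition simple_dual_module :: "('k::field \<Rightarrow> 'c::ab_group_add \<Rightarrow> 'c) \<Rightarrow> ('c \<Rightarrow> ('c \<times> 'c) list) \<Rightarrow> ('c \<Rightarrow> 'k)
    \<Rightarrow> ('k \<Rightarrow> 'h::ab_group_add \<Rightarrow> 'h) \<Rightarrow> (('c \<Rightarrow> 'k) \<Rightarrow> 'h \<Rightarrow> 'h) \<Rightarrow> bool" where
  "simple_dual_module sc \<Delta> \<epsilon> scH act \<longleftrightarrow>
     dual_module sc \<Delta> \<epsilon> scH act \<and> (\<exists>x::'h. x \<noteq> 0) \<and>
     (\<forall>N. dual_submodule sc act N \<longrightarrow> N = {0} \<or> N = UNIV)"

definition embeds_in_dual :: "('k::field \<Rightarrow> 'c::ab_group_add \<Rightarrow> 'c) \<Rightarrow> ('c \<Rightarrow> ('c \<times> 'c) list)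
    \<Rightarrow> (('c \<Rightarrow> 'k) \<Rightarrow> 'h::ab_group_add \<Rightarrow> 'h) \<Rightarrow> bool" where
  "embeds_in_dual sc \<Delta> act \<longleftrightarrow>
     (\<exists>\<phi> :: 'h \<Rightarrow> ('c \<Rightarrow> 'k). inj \<phi> \<and> (\<forall>x. \<phi> x \<in> dual_space sc) \<and>
        (\<forall>x y. \<phi> (x + y) = (\<lambda>c. \<phi> x c + \<phi> y c)) \<and>
        (\<forall>f\<in>dual_space sc. \<forall>x. \<phi> (act f x) = conv \<Delta> f (\<phi> x)))"

definition rational_dual_module :: "('k::field \<Rightarrow> 'c::ab_group_add \<Rightarrow> 'c)
    \<Rightarrow> ('k \<Rightarrow> 'h::ab_group_add \<Rightarrow> 'h) \<Rightarrow> (('c \<Rightarrow> 'k) \<Rightarrow> 'h \<Rightarrow> 'h) \<Rightarrow> bool" where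
  "rational_dual_module sc scH act \<longleftrightarrow>
     (\<forall>m. \<exists>ps :: ('h \<times> 'c) list. \<forall>f\<in>dual_space sc. act f m = (\<Sum>(mi,ci)\<leftarrow>ps. scH (f ci) mi))"

end

theory Submission
  imports Defs
begin

text \<open>Embed H in C* by \<phi> and pick x0 \<noteq> 0 and c with \<phi> x0 c \<noteq> 0. The x with
  (g \<star> \<phi> x)(c) = 0 for all g \<in> C* form a submodule not containing x0, hence the zero
  submodule. Writing (\<Delta> \<otimes> id)\<Delta> c = \<Sum> c1 \<otimes> c21 \<otimes> c22, every f vanishing on the finitely
  many points c21 maps H into that submodule by coassociativity, so f acts as zero. Hence the
  action of f only depends on its values at the c21; interpolating these values by fixed
  functionals e_i, as f = \<Sum> f(d_i) e_i at the c21, yields f \<rightharpoonup> m = \<Sum> f(d_i) (e_i \<rightharpoonup> m).\<close>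

lemma vector_space_field_mult: "vector_space ((*) :: 'k::field \<Rightarrow> 'k \<Rightarrow> 'k)"
  by unfold_locales (auto simp: algebra_simps)

lemma dual_space_iff:
  assumes "vector_space sc"
  shows "f \<in> dual_space sc \<longleftrightarrow> (\<forall>x y. f (x + y) = f x + f y) \<and> (\<forall>r x. f (sc r x) = r * f x)"
  using assms vector_space_field_mult unfolding dual_space_def Vector_Spaces.linear_iff by auto

lemma dual_space_zero: "vector_space sc \<Longrightarrow> (\<lambda>x. 0) \<in> dual_space sc"
  by (simp add: dual_space_iff)

lemma dual_space_add:
  "\<lbrakk>vector_space sc; f \<in> dual_space sc; g \<in> dual_space sc\<rbrakk> \<Longrightarrow> (\<lambda>x. f x + g x) \<in> dual_space sc"
  by (simp add: dual_space_iff algebra_simps)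

lemma dual_space_diff:
  "\<lbrakk>vector_space sc; f \<in> dual_space sc; g \<in> dual_space sc\<rbrakk> \<Longrightarrow> (\<lambda>x. f x - g x) \<in> dual_space sc"
  by (simp add: dual_space_iff algebra_simps)

lemma dual_space_scale: "\<lbrakk>vector_space sc; f \<in> dual_space sc\<rbrakk> \<Longrightarrow> (\<lambda>x. r * f x) \<in> dual_space sc"
  by (simp add: dual_space_iff algebra_simps)

lemma dual_space_sum_list:
  assumes "vector_space sc" and "\<forall>y\<in>set ys. F y \<in> dual_space sc"
  shows "(\<lambda>x. \<Sum>y\<leftarrow>ys. F y x) \<in> dual_space sc"
  using assms(2) by (induct ys) (simp_all add: dual_space_zero dual_space_add assms(1))

lemma dual_space_map_sum_list:
  assumes "vector_space sc" and "h \<in> dual_space sc"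
  shows "h (\<Sum>x\<leftarrow>xs. G x) = (\<Sum>x\<leftarrow>xs. h (G x))"
proof -
  interpret Vector_Spaces.linear sc "(*)" h
    using assms unfolding dual_space_def by simp
  show ?thesis by (induct xs) (simp_all add: add)
qed

definition interpolant :: "(('c \<Rightarrow> 'k) \<times> 'c) list \<Rightarrow> ('c \<Rightarrow> 'k::field) \<Rightarrow> 'c \<Rightarrow> 'k" where
  "interpolant ps f = (\<lambda>x. \<Sum>(e, d)\<leftarrow>ps. f d * e x)"

lemma interpolant_in_dual_space:
  assumes "vector_space sc" and "\<forall>(e, d)\<in>set ps. e \<in> dual_space sc"
  shows "interpolant ps f \<in> dual_space sc"
  unfolding interpolant_def
  using dual_space_sum_list[OF assms(1), of ps "\<lambda>(e, d) x. f d * e x"] assms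
  by (auto simp: split_def intro: dual_space_scale)

lemma interpolant_Cons: "interpolant ((e, d) # ps) f = (\<lambda>x. f d * e x + interpolant ps f x)"
  by (simp add: interpolant_def)

lemma interpolant_shift:
  "interpolant (map (\<lambda>(e, d). (\<lambda>x. e x - e p * w x, d)) ps) f x
     = interpolant ps f x - interpolant ps f p * (w x :: 'k::field)"
  by (induct ps) (auto simp: interpolant_def algebra_simps)

lemma interpolation_Cons:
  assumes vs: "vector_space sc"
    and ps_dual: "\<forall>(e, d)\<in>set ps. e \<in> dual_space sc"
    and ps_interp: "\<forall>f\<in>dual_space sc. \<forall>q\<in>set P. f q = interpolant ps f q"
  obtains ps' where "\<forall>(e, d)\<in>set ps'. e \<in> dual_space sc"
    and "\<forall>f\<in>dual_space sc. \<forall>q\<in>set (p # P). f q = interpolant ps' f q"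
proof (cases "\<exists>e\<in>dual_space sc. e p \<noteq> interpolant ps e p")
  case True
  then obtain e where e: "e \<in> dual_space sc" "e p \<noteq> interpolant ps e p" by blast
  define w where "w x = (e x - interpolant ps e x) / (e p - interpolant ps e p)" for x
  have w_dual: "w \<in> dual_space sc"
    using dual_space_scale[OF vs dual_space_diff[OF vs e(1) interpolant_in_dual_space[OF vs ps_dual]],
        of "1 / (e p - interpolant ps e p)"]
    by (simp add: w_def[abs_def])
  have w_p: "w p = 1" using e(2) by (simp add: w_def)
  have w_P: "w q = 0" if "q \<in> set P" for q
    using ps_interp e(1) that by (simp add: w_def)
  define ps' where "ps' = (w, p) # map (\<lambda>(e, d). (\<lambda>x. e x - e p * w x, d)) ps"
  have ps'_interp: "interpolant ps' f x = f p * w x + interpolant ps f x - interpolant ps f p * w x"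
    for f x
    unfolding ps'_def interpolant_Cons interpolant_shift by simp
  have "\<forall>f\<in>dual_space sc. \<forall>q\<in>set (p # P). f q = interpolant ps' f q"
  proof (intro ballI)
    fix f q assume "f \<in> dual_space sc" "q \<in> set (p # P)"
    then show "f q = interpolant ps' f q"
      using ps_interp w_p w_P unfolding ps'_interp by (cases "q \<in> set P") auto
  qed
  moreover have "\<forall>(e, d)\<in>set ps'. e \<in> dual_space sc"
    using ps_dual w_dual unfolding ps'_def
    by (auto intro!: dual_space_diff[OF vs] dual_space_scale[OF vs])
  ultimately show thesis using that by blast
next
  case False
  then show thesis using that[of ps] ps_dual ps_interp by auto
qed

lemma dual_space_interpolation:
  assumes "vector_space sc"
  obtains ps where "\<forall>(e, d)\<in>set ps. e \<in> dual_space sc"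
    and "\<forall>f\<in>dual_space sc. \<forall>q\<in>set P. f q = interpolant ps f q"
proof (induct P arbitrary: thesis)
  case Nil
  then show ?case by (metis empty_iff list.set(1))
next
  case (Cons p P)
  obtain ps where "\<forall>(e, d)\<in>set ps. e \<in> dual_space sc"
    and "\<forall>f\<in>dual_space sc. \<forall>q\<in>set P. f q = interpolant ps f q"
    using Cons.hyps by blast
  then show ?case using interpolation_Cons[OF assms] Cons.prems by blast
qed

lemma dual_module_act_add:
  "\<lbrakk>dual_module sc \<Delta> \<epsilon> scH act; f \<in> dual_space sc; g \<in> dual_space sc\<rbrakk>
    \<Longrightarrow> act (\<lambda>x. f x + g x) m = act f m + act g m"
  unfolding dual_module_def by blast

lemma dual_module_act_scale:
  "\<lbrakk>dual_module sc \<Delta> \<epsilon> scH act; f \<in> dual_space sc\<rbrakk> \<Longrightarrow> act (\<lambda>x. r * f x) m = scH r (act f m)"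
  unfolding dual_module_def by blast

lemma dual_module_act_zero:
  assumes "vector_space sc" and "dual_module sc \<Delta> \<epsilon> scH act"
  shows "act (\<lambda>x. 0) m = 0"
  using dual_module_act_add[OF assms(2) dual_space_zero[OF assms(1)] dual_space_zero[OF assms(1)], of m]
  by simp

lemma dual_module_act_interpolant:
  assumes vs: "vector_space sc" and dm: "dual_module sc \<Delta> \<epsilon> scH act"
    and ps_dual: "\<forall>(e, d)\<in>set ps. e \<in> dual_space sc"
  shows "act (interpolant ps f) m = (\<Sum>(e, d)\<leftarrow>ps. scH (f d) (act e m))"
  using ps_dual
proof (induct ps)
  case Nil
  then show ?case using dual_module_act_zero[OF vs dm] by (simp add: interpolant_def)
next
  case (Cons ed ps)
  obtain e d where ed: "ed = (e, d)" by force
  with Cons.prems have e: "e \<in> dual_space sc" and ps: "\<forall>(e, d)\<in>set ps. e \<in> dual_space sc"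
    by auto
  have "act (interpolant (ed # ps) f) m = act (\<lambda>x. f d * e x + interpolant ps f x) m"
    by (simp add: ed interpolant_Cons)
  also have "\<dots> = scH (f d) (act e m) + act (interpolant ps f) m"
    using dual_module_act_add[OF dm dual_space_scale[OF vs e] interpolant_in_dual_space[OF vs ps]]
      dual_module_act_scale[OF dm e] by simp
  finally show ?case using Cons ps ed by simp
qed

lemma rational_dual_moduleI:
  assumes vs: "vector_space sc" and dm: "dual_module sc \<Delta> \<epsilon> scH act"
    and annihilator: "\<forall>f\<in>dual_space sc. (\<forall>p\<in>set P. f p = 0) \<longrightarrow> (\<forall>m. act f m = 0)"
  shows "rational_dual_module sc scH act"
  unfolding rational_dual_module_def
proof
  fix m
  obtain ps where ps_dual: "\<forall>(e, d)\<in>set ps. e \<in> dual_space sc"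
    and ps_interp: "\<forall>f\<in>dual_space sc. \<forall>q\<in>set P. f q = interpolant ps f q"
    using dual_space_interpolation[OF vs] by blast
  have "act f m = (\<Sum>(mi, ci)\<leftarrow>map (\<lambda>(e, d). (act e m, d)) ps. scH (f ci) mi)"
    if f: "f \<in> dual_space sc" for f
  proof -
    have g: "interpolant ps f \<in> dual_space sc"
      by (rule interpolant_in_dual_space[OF vs ps_dual])
    have error: "(\<lambda>x. f x - interpolant ps f x) \<in> dual_space sc"
      by (rule dual_space_diff[OF vs f g])
    have "act f m = act (\<lambda>x. (f x - interpolant ps f x) + interpolant ps f x) m" by simp
    also have "\<dots> = act (\<lambda>x. f x - interpolant ps f x) m + act (interpolant ps f) m"
      by (rule dual_module_act_add[OF dm error g])
    also have "act (\<lambda>x. f x - interpolant ps f x) m = 0"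
      using annihilator error ps_interp f by simp
    finally show ?thesis
      using dual_module_act_interpolant[OF vs dm ps_dual] by (simp add: o_def split_def)
  qed
  then show "\<exists>ps. \<forall>f\<in>dual_space sc. act f m = (\<Sum>(mi, ci)\<leftarrow>ps. scH (f ci) mi)" by blast
qed

lemma coalgebra_vector_space: "coalgebra sc \<Delta> \<epsilon> \<Longrightarrow> vector_space sc"
  unfolding coalgebra_def by (elim conjE)

lemma coalgebra_counit_in_dual_space: "coalgebra sc \<Delta> \<epsilon> \<Longrightarrow> \<epsilon> \<in> dual_space sc"
  unfolding coalgebra_def by (elim conjE)

lemma coalgebra_conv_in_dual_space:
  "\<lbrakk>coalgebra sc \<Delta> \<epsilon>; f \<in> dual_space sc; g \<in> dual_space sc\<rbrakk> \<Longrightarrow> conv \<Delta> f g \<in> dual_space sc"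
  unfolding coalgebra_def by (elim conjE) blast

lemma conv_assoc:
  assumes "coalgebra sc \<Delta> \<epsilon>" and "f \<in> dual_space sc" "g \<in> dual_space sc" "h \<in> dual_space sc"
  shows "conv \<Delta> (conv \<Delta> f g) h = conv \<Delta> f (conv \<Delta> g h)"
  using assms unfolding coalgebra_def conv_def by auto

lemma conv_counit_left:
  assumes "coalgebra sc \<Delta> \<epsilon>" and h: "h \<in> dual_space sc"
  shows "conv \<Delta> \<epsilon> h = h"
proof
  fix c
  have vs: "vector_space sc" using assms(1) by (rule coalgebra_vector_space)
  from assms(1) have counit: "(\<Sum>(a, b)\<leftarrow>\<Delta> c. sc (\<epsilon> a) b) = c"
    unfolding coalgebra_def by auto
  have "conv \<Delta> \<epsilon> h c = (\<Sum>(a, b)\<leftarrow>\<Delta> c. h (sc (\<epsilon> a) b))"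
    unfolding conv_def using h vs by (simp add: dual_space_iff split_def)
  also have "\<dots> = h (\<Sum>(a, b)\<leftarrow>\<Delta> c. sc (\<epsilon> a) b)"
    using dual_space_map_sum_list[OF vs h, of "\<lambda>(a, b). sc (\<epsilon> a) b" "\<Delta> c"] by (simp add: split_def)
  finally show "conv \<Delta> \<epsilon> h c = h c" using counit by simp
qed

definition middle_factors :: "('c \<Rightarrow> ('c \<times> 'c) list) \<Rightarrow> 'c \<Rightarrow> 'c list" where
  "middle_factors \<Delta> c = concat (map (\<lambda>(a, b). map fst (\<Delta> b)) (\<Delta> c))"

lemma sum_list_map_eq_0: "(\<And>x. x \<in> set xs \<Longrightarrow> F x = 0) \<Longrightarrow> (\<Sum>x\<leftarrow>xs. F x) = (0::'a::monoid_add)"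
  by (induct xs) auto

lemma conv_conv_eq_0_if_vanishes_on_middle_factors:
  assumes "\<forall>p\<in>set (middle_factors \<Delta> c). f p = 0"
  shows "conv \<Delta> g (conv \<Delta> f h) c = (0::'k::field)"
proof -
  have "conv \<Delta> f h b = 0" if "(a, b) \<in> set (\<Delta> c)" for a b
    using assms that unfolding conv_def middle_factors_def
    by (force intro!: sum_list_map_eq_0)
  then show ?thesis unfolding conv_def by (force intro!: sum_list_map_eq_0)
qed

lemma pointwise_additive_zero:
  fixes \<phi> :: "'a::monoid_add \<Rightarrow> 'c \<Rightarrow> 'b::ab_group_add"
  assumes "\<And>x y. \<phi> (x + y) = (\<lambda>c. \<phi> x c + \<phi> y c)"
  shows "\<phi> 0 = (\<lambda>c. 0)"
proof
  fix c
  show "\<phi> 0 c = 0" using fun_cong[OF assms[of 0 0], of c] by simp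
qed

lemma dual_submodule_conv_vanishing_at:
  assumes "coalgebra sc \<Delta> \<epsilon>"
    and \<phi>_dual: "\<And>x. \<phi> x \<in> dual_space sc"
    and \<phi>_add: "\<And>x y. \<phi> (x + y) = (\<lambda>c. \<phi> x c + \<phi> y c)"
    and \<phi>_act: "\<And>f x. f \<in> dual_space sc \<Longrightarrow> \<phi> (act f x) = conv \<Delta> f (\<phi> x)"
  shows "dual_submodule sc act {x. \<forall>g\<in>dual_space sc. conv \<Delta> g (\<phi> x) c = 0}"
  unfolding dual_submodule_def
proof (intro conjI ballI)
  show "0 \<in> {x. \<forall>g\<in>dual_space sc. conv \<Delta> g (\<phi> x) c = 0}"
    by (simp add: conv_def pointwise_additive_zero[OF \<phi>_add] split_def)
next
  fix x y assume "x \<in> {x. \<forall>g\<in>dual_space sc. conv \<Delta> g (\<phi> x) c = 0}"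
    and "y \<in> {x. \<forall>g\<in>dual_space sc. conv \<Delta> g (\<phi> x) c = 0}"
  then show "x + y \<in> {x. \<forall>g\<in>dual_space sc. conv \<Delta> g (\<phi> x) c = 0}"
    by (simp add: conv_def \<phi>_add distrib_left split_def sum_list_addf)
next
  fix f x assume f: "f \<in> dual_space sc"
    and x: "x \<in> {x. \<forall>g\<in>dual_space sc. conv \<Delta> g (\<phi> x) c = 0}"
  have "conv \<Delta> g (\<phi> (act f x)) c = 0" if g: "g \<in> dual_space sc" for g
  proof -
    have "conv \<Delta> g (\<phi> (act f x)) c = conv \<Delta> (conv \<Delta> g f) (\<phi> x) c"
      using conv_assoc[OF assms(1) g f \<phi>_dual] \<phi>_act[OF f] by simp
    moreover have "conv \<Delta> g f \<in> dual_space sc"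
      by (rule coalgebra_conv_in_dual_space[OF assms(1) g f])
    ultimately show ?thesis using x by simp
  qed
  then show "act f x \<in> {x. \<forall>g\<in>dual_space sc. conv \<Delta> g (\<phi> x) c = 0}" by simp
qed

lemma embedded_simple_dual_module_annihilator:
  fixes sc :: "'k::field \<Rightarrow> 'c::ab_group_add \<Rightarrow> 'c" and act :: "('c \<Rightarrow> 'k) \<Rightarrow> 'h::ab_group_add \<Rightarrow> 'h"
  assumes coalg: "coalgebra sc \<Delta> \<epsilon>"
    and simple: "simple_dual_module sc \<Delta> \<epsilon> scH act"
    and "embeds_in_dual sc \<Delta> act"
  obtains P where "\<forall>f\<in>dual_space sc. (\<forall>p\<in>set P. f p = 0) \<longrightarrow> (\<forall>m. act f m = 0)"
proof -
  obtain \<phi> :: "'h \<Rightarrow> 'c \<Rightarrow> 'k" where "inj \<phi>" and \<phi>_dual: "\<And>x. \<phi> x \<in> dual_space sc"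
    and \<phi>_add: "\<And>x y. \<phi> (x + y) = (\<lambda>c. \<phi> x c + \<phi> y c)"
    and \<phi>_act: "\<And>f x. f \<in> dual_space sc \<Longrightarrow> \<phi> (act f x) = conv \<Delta> f (\<phi> x)"
    using assms(3) unfolding embeds_in_dual_def by blast
  obtain x0 :: 'h where "x0 \<noteq> 0" using simple unfolding simple_dual_module_def by (elim conjE exE)
  with \<open>inj \<phi>\<close> have "\<phi> x0 \<noteq> \<phi> 0" by (meson injD)
  then obtain c where c: "\<phi> x0 c \<noteq> 0" using pointwise_additive_zero[OF \<phi>_add] by auto
  define N where "N = {x. \<forall>g\<in>dual_space sc. conv \<Delta> g (\<phi> x) c = 0}"
  have "dual_submodule sc act N"
    unfolding N_def by (rule dual_submodule_conv_vanishing_at[OF coalg \<phi>_dual \<phi>_add \<phi>_act])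
  moreover have "x0 \<notin> N"
  proof -
    have "\<epsilon> \<in> dual_space sc" by (rule coalgebra_counit_in_dual_space[OF coalg])
    moreover have "conv \<Delta> \<epsilon> (\<phi> x0) c \<noteq> 0" using conv_counit_left[OF coalg \<phi>_dual] c by simp
    ultimately show ?thesis unfolding N_def by blast
  qed
  ultimately have "N = {0}" using simple unfolding simple_dual_module_def by auto
  have "act f m = 0" if f: "f \<in> dual_space sc" and "\<forall>p\<in>set (middle_factors \<Delta> c). f p = 0" for f m
  proof -
    have "act f m \<in> N"
      using conv_conv_eq_0_if_vanishes_on_middle_factors[OF that(2)] \<phi>_act[OF f]
      unfolding N_def by simp
    then show ?thesis using \<open>N = {0}\<close> by simp
  qed
  then show thesis using that by blast
qed

theorem proposition6p2:
  fixes sc :: "'k::field \<Rightarrow> 'c::ab_group_add \<Rightarrow> 'c"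
    and \<Delta> :: "'c \<Rightarrow> ('c \<times> 'c) list"
    and \<epsilon> :: "'c \<Rightarrow> 'k"
    and scH :: "'k \<Rightarrow> 'h::ab_group_add \<Rightarrow> 'h"
    and act :: "('c \<Rightarrow> 'k) \<Rightarrow> 'h \<Rightarrow> 'h"
  assumes "coalgebra sc \<Delta> \<epsilon>"
    and "simple_dual_module sc \<Delta> \<epsilon> scH act"
    and "embeds_in_dual sc \<Delta> act"
  shows "rational_dual_module sc scH act"
proof -
  have "vector_space sc" by (rule coalgebra_vector_space[OF assms(1)])
  moreover have "dual_module sc \<Delta> \<epsilon> scH act"
    using assms(2) unfolding simple_dual_module_def by (elim conjE)
  moreover obtain P where "\<forall>f\<in>dual_space sc. (\<forall>p\<in>set P. f p = 0) \<longrightarrow> (\<forall>m. act f m = 0)"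
    using embedded_simple_dual_module_annihilator[OF assms] by blast
  ultimately show ?thesis by (rule rational_dual_moduleI)
qed

end
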